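(* Let $a\ge1$ and let $M_0,M_1,\dots,M_{a-1}$ be twisted $I$-adically incremental matrices with entries in $\mathbb{Z}_q[\![\underline\pi]\!]$. Write $\det(I-sM_{a-1}\cdots M_1M_0)=\sum_{k\ge0}(-1)^kr_k(\underline\pi)s^k$. Then for every $k\ge0$, $$\mathrm{val}_I(r_k(\underline\pi))\ge\frac{ak(k-1)(p-1)}{2d},$$ and $$r_k(\underline\pi)\equiv\prod_{j=0}^{a-1}\det\big((M_j)_{mn}\big)_{0\le m,n\le k-1}\pmod{I^{\lceil\frac{ak(k-1)(p-1)+(p-1)}{2d}\rceil}}.$$
   Context: $p$ prime, $d$ a positive integer, $\mathbb{Z}_q$ the unramified extension of $\mathbb{Z}_p$ with residue field $\mathbb{F}_q$, $I=(\pi_1,\dots,\pi_\ell)\subseteq\mathbb{Z}_q[\![\pi_1,\dots,\pi_\ell]\!]$. Define $\mathrm{val}_I(x)=n$ if $x\in I^n\setminus I^{n+1}$ and $\mathrm{val}_I(0)=\infty$. Matrices have rows and columns indexed by $\mathbb{Z}_{\ge0}$. A matrix $(h_{mn})_{m,n\ge0}$ over $\mathbb{Z}_q[\![\underline\pi]\!]$ is twisted $I$-adically incremental if $\mathrm{val}_I(h_{mn})\ge\frac{mp-n}{d}$ for all $m,n\ge0$. Products of such infinite matrices and their characteristic power series $\det(I-sM)=\sum_k(-1)^ks^k\sum_{m_0<\dots<m_{k-1}}\det(M_{m_im_j})$ converge $I$-adically. *)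

theory Defs
  imports "HOL-Analysis.Analysis"
begin

text \<open>Multivariate formal power series in the variables indexed by a finite type 'v
  (so the number of variables is CARD('v)) with coefficients in a commutative ring 'a.
  A series is its coefficient function on exponent vectors (monomials) e :: 'v \<Rightarrow> nat.\<close>

type_synonym ('v, 'a) mps = "('v \<Rightarrow> nat) \<Rightarrow> 'a"

definition mdeg :: "('v::finite \<Rightarrow> nat) \<Rightarrow> nat" where
  "mdeg e = (\<Sum>v\<in>UNIV. e v)"

definition mps_zero :: "('v, 'a::zero) mps" where
  "mps_zero = (\<lambda>_. 0)"

definition mps_one :: "('v, 'a::{zero,one}) mps" where
  "mps_one = (\<lambda>e. if e = (\<lambda>_. 0) then 1 else 0)"

definition mps_of_int :: "int \<Rightarrow> ('v, 'a::ring_1) mps" where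
  "mps_of_int k = (\<lambda>e. if e = (\<lambda>_. 0) then of_int k else 0)"

definition mps_add :: "('v, 'a::plus) mps \<Rightarrow> ('v, 'a) mps \<Rightarrow> ('v, 'a) mps" where
  "mps_add f g = (\<lambda>e. f e + g e)"

definition mps_diff :: "('v, 'a::minus) mps \<Rightarrow> ('v, 'a) mps \<Rightarrow> ('v, 'a) mps" where
  "mps_diff f g = (\<lambda>e. f e - g e)"

definition mps_mult :: "('v::finite, 'a::comm_ring_1) mps \<Rightarrow> ('v, 'a) mps \<Rightarrow> ('v, 'a) mps" where
  "mps_mult f g = (\<lambda>e. \<Sum>e1\<in>{e1. e1 \<le> e}. f e1 * g (\<lambda>v. e v - e1 v))"

text \<open>The n-th power of the ideal I = (pi_1,...,pi_l): series all of whose monomials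
  have total degree at least n.\<close>
definition Ipow :: "nat \<Rightarrow> ('v::finite, 'a::zero) mps set" where
  "Ipow n = {f. \<forall>e. mdeg e < n \<longrightarrow> f e = 0}"

definition valI :: "('v::finite, 'a::zero) mps \<Rightarrow> enat" where
  "valI f = (if f = mps_zero then \<infinity> else enat (THE n. f \<in> Ipow n \<and> f \<notin> Ipow (Suc n)))"

definition valI_ge :: "('v::finite, 'a::zero) mps \<Rightarrow> real \<Rightarrow> bool" where
  "valI_ge f c = (case valI f of \<infinity> \<Rightarrow> True | enat n \<Rightarrow> c \<le> real n)"

text \<open>I-adic sum of a family of series, computed coefficientwise: for an I-adically
  convergent family only finitely many members have a nonzero coefficient at a given
  monomial (there are finitely many monomials of each degree), and the I-adic limit of
  the partial sums has exactly these coefficients.\<close>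
definition isum :: "'i set \<Rightarrow> ('i \<Rightarrow> ('v, 'a::comm_monoid_add) mps) \<Rightarrow> ('v, 'a) mps" where
  "isum A F = (\<lambda>e. \<Sum>i\<in>{i\<in>A. F i e \<noteq> 0}. F i e)"

definition mps_prod_list :: "('v::finite, 'a::comm_ring_1) mps list \<Rightarrow> ('v, 'a) mps" where
  "mps_prod_list fs = foldr mps_mult fs mps_one"

definition mps_prod :: "nat set \<Rightarrow> (nat \<Rightarrow> ('v::finite, 'a::comm_ring_1) mps) \<Rightarrow> ('v, 'a) mps" where
  "mps_prod S F = mps_prod_list (map F (sorted_list_of_set S))"

type_synonym ('v, 'a) imat = "nat \<Rightarrow> nat \<Rightarrow> ('v, 'a) mps"

definition twisted_incremental :: "nat \<Rightarrow> nat \<Rightarrow> ('v::finite, 'a::zero) imat \<Rightarrow> bool" where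
  "twisted_incremental p d M \<longleftrightarrow>
     (\<forall>m n. valI_ge (M m n) ((real m * real p - real n) / real d))"

definition mat_mult :: "('v::finite, 'a::comm_ring_1) imat \<Rightarrow> ('v, 'a) imat \<Rightarrow> ('v, 'a) imat" where
  "mat_mult A B = (\<lambda>m n. isum UNIV (\<lambda>k. mps_mult (A m k) (B k n)))"

definition mat_id :: "('v, 'a::comm_ring_1) imat" where
  "mat_id = (\<lambda>m n. if m = n then mps_one else mps_zero)"

fun mat_chain :: "(nat \<Rightarrow> ('v::finite, 'a::comm_ring_1) imat) \<Rightarrow> nat \<Rightarrow> ('v, 'a) imat" where
  "mat_chain M 0 = mat_id"
| "mat_chain M (Suc j) = mat_mult (M j) (mat_chain M j)"

definition minor_det :: "('v::finite, 'a::comm_ring_1) imat \<Rightarrow> nat set \<Rightarrow> ('v, 'a) mps" where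
  "minor_det A S = isum {\<sigma>. \<sigma> permutes S}
     (\<lambda>\<sigma>. mps_mult (mps_of_int (sign \<sigma>)) (mps_prod S (\<lambda>i. A i (\<sigma> i))))"

text \<open>det(I - sA) = sum_k (-1)^k r_k s^k with r_k = sum over m_0<...<m_{k-1} of the
  principal minors.\<close>
definition char_coeff :: "('v::finite, 'a::comm_ring_1) imat \<Rightarrow> nat \<Rightarrow> ('v, 'a) mps" where
  "char_coeff A k = isum {S. finite S \<and> card S = k} (\<lambda>S. minor_det A S)"

end

(*
  Work in the ring of power series and track, for every minor with rows r_i and columns
  c_i (i in I), a lower bound for its I-adic valuation.  For one twisted incremental matrix
  this bound is sum_i (p r_i - c_i) / d.  A minor of a product A B expands, Cauchy-Binet
  style, over maps f from I to the intermediate indices; terms with f not injective vanish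
  and otherwise sum_i f_i >= |I| (|I| - 1) / 2, so each further factor raises the bound by
  (p - 1) / d * |I| (|I| - 1) / 2.  For the leading k x k minor, the terms with f a permutation
  of {0..<k} give the product of the leading minors, and every other term has
  sum_i f_i >= k (k - 1) / 2 + 1, hence an extra (p - 1) / d.  The same dichotomy among the
  k-subsets S of the rows, applied to the principal minors summed in r_k, gives both claims.
*)
theory Submission
  imports Defs
begin

section \<open>Multivariate power series as a commutative ring\<close>

lemma finite_exponents_le: "finite {x :: 'v::finite \<Rightarrow> nat. x \<le> e}"
proof (rule finite_subset)
  show "{x. x \<le> e} \<subseteq> PiE UNIV (\<lambda>v. {..e v})"
    by (auto simp: le_fun_def PiE_def extensional_def)
qed (rule finite_PiE, auto)

lemma mps_mult_eq: "mps_mult f g e = (\<Sum>x | x \<le> e. f x * g (e - x))"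
  by (simp add: mps_mult_def fun_diff_def)

lemma mps_mult_commute: "mps_mult f g = mps_mult g (f :: ('v::finite, 'a::comm_ring_1) mps)"
proof
  fix e
  show "mps_mult f g e = mps_mult g f e"
    unfolding mps_mult_eq
    by (rule sum.reindex_bij_witness[where i="\<lambda>x. e - x" and j="\<lambda>x. e - x"])
       (auto simp: le_fun_def fun_eq_iff fun_diff_def mult.commute)
qed

lemma mps_mult_assoc:
  "mps_mult (mps_mult f g) h = mps_mult f (mps_mult g (h :: ('v::finite, 'a::comm_ring_1) mps))"
proof
  fix e
  have "mps_mult (mps_mult f g) h e = (\<Sum>x | x \<le> e. \<Sum>y | y \<le> x. f y * g (x - y) * h (e - x))"
    unfolding mps_mult_eq by (simp add: sum_distrib_right)
  also have "\<dots> = (\<Sum>x\<in>{x. x \<le> e}. \<Sum>y\<in>{y\<in>{y. y \<le> e}. y \<le> x}. f y * g (x - y) * h (e - x))"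
    by (intro sum.cong) (auto intro: order_trans)
  also have "\<dots> = (\<Sum>y\<in>{y. y \<le> e}. \<Sum>x\<in>{x\<in>{x. x \<le> e}. y \<le> x}. f y * g (x - y) * h (e - x))"
    by (rule sum.swap_restrict) (rule finite_exponents_le)+
  also have "\<dots> = (\<Sum>y | y \<le> e. \<Sum>z | z \<le> e - y. f y * g z * h (e - y - z))"
  proof (rule sum.cong[OF refl])
    fix y assume "y \<in> {y. y \<le> e}"
    then show "(\<Sum>x\<in>{x\<in>{x. x \<le> e}. y \<le> x}. f y * g (x - y) * h (e - x)) =
               (\<Sum>z | z \<le> e - y. f y * g z * h (e - y - z))"
      by (intro sum.reindex_bij_witness[where j="\<lambda>x. x - y" and i="\<lambda>z v. y v + z v"])
         (auto simp: le_fun_def fun_eq_iff fun_diff_def le_diff_conv2 add.commute)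
  qed
  also have "\<dots> = mps_mult f (mps_mult g h) e"
    unfolding mps_mult_eq by (simp add: sum_distrib_left mult.assoc)
  finally show "mps_mult (mps_mult f g) h e = mps_mult f (mps_mult g h) e" .
qed

lemma mps_mult_one_left: "mps_mult mps_one f = (f :: ('v::finite, 'a::comm_ring_1) mps)"
proof
  fix e
  have "mps_mult mps_one f e = (\<Sum>x | x \<le> e. if x = (\<lambda>_. 0) then f (e - x) else 0)"
    unfolding mps_mult_eq mps_one_def by (rule sum.cong) auto
  also have "\<dots> = f e"
    by (subst sum.delta[OF finite_exponents_le]) (auto simp: fun_diff_def le_fun_def)
  finally show "mps_mult mps_one f e = f e" .
qed

lemma mps_mult_add_distrib_right:
  "mps_mult (mps_add f g) h = mps_add (mps_mult f h) (mps_mult g (h :: ('v::finite, 'a::comm_ring_1) mps))"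
  by (rule ext) (simp add: mps_mult_eq mps_add_def sum.distrib distrib_right)

typedef (overloaded) ('v::finite, 'a::comm_ring_1) mseries = "UNIV :: ('v, 'a) mps set"
  by simp

setup_lifting type_definition_mseries

instantiation mseries :: (finite, comm_ring_1) comm_ring_1
begin
lift_definition zero_mseries :: "('a, 'b) mseries" is mps_zero .
lift_definition one_mseries :: "('a, 'b) mseries" is mps_one .
lift_definition plus_mseries :: "('a, 'b) mseries \<Rightarrow> ('a, 'b) mseries \<Rightarrow> ('a, 'b) mseries" is mps_add .
lift_definition minus_mseries :: "('a, 'b) mseries \<Rightarrow> ('a, 'b) mseries \<Rightarrow> ('a, 'b) mseries" is mps_diff .
lift_definition uminus_mseries :: "('a, 'b) mseries \<Rightarrow> ('a, 'b) mseries" is "\<lambda>f e. - f e" .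
lift_definition times_mseries :: "('a, 'b) mseries \<Rightarrow> ('a, 'b) mseries \<Rightarrow> ('a, 'b) mseries" is mps_mult .
instance
proof
  fix x y z :: "('a, 'b) mseries"
  show "x * y * z = x * (y * z)" by transfer (rule mps_mult_assoc)
  show "x * y = y * x" by transfer (rule mps_mult_commute)
  show "1 * x = x" by transfer (rule mps_mult_one_left)
  show "(x + y) * z = x * z + y * z" by transfer (rule mps_mult_add_distrib_right)
  show "x + y + z = x + (y + z)" by transfer (simp add: mps_add_def add.assoc)
  show "x + y = y + x" by transfer (simp add: mps_add_def add.commute)
  show "0 + x = x" by transfer (simp add: mps_add_def mps_zero_def)
  show "- x + x = 0" by transfer (simp add: mps_add_def mps_zero_def)
  show "x - y = x + - y" by transfer (simp add: mps_add_def mps_diff_def)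
  show "(0 :: ('a, 'b) mseries) \<noteq> 1"
    by transfer (auto simp: mps_zero_def mps_one_def fun_eq_iff)
qed
end

lemma Rep_mseries_add: "Rep_mseries (x + y) e = Rep_mseries x e + Rep_mseries y e"
  by (simp add: plus_mseries.rep_eq mps_add_def)

lemma Rep_mseries_diff: "Rep_mseries (x - y) e = Rep_mseries x e - Rep_mseries y e"
  by (simp add: minus_mseries.rep_eq mps_diff_def)

lemma Rep_mseries_sum: "Rep_mseries (sum F A) e = (\<Sum>i\<in>A. Rep_mseries (F i) e)"
  by (induction A rule: infinite_finite_induct)
     (auto simp: zero_mseries.rep_eq mps_zero_def Rep_mseries_add)

lemma Rep_mseries_of_int: "Rep_mseries (of_int k :: ('v::finite, 'a::comm_ring_1) mseries) = mps_of_int k"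
proof (induction k rule: int_induct[where k=0])
  case base
  then show ?case by (simp add: zero_mseries.rep_eq mps_zero_def mps_of_int_def fun_eq_iff)
next
  case (step1 i)
  then show ?case by (auto simp: fun_eq_iff Rep_mseries_add one_mseries.rep_eq mps_one_def mps_of_int_def)
next
  case (step2 i)
  then show ?case by (auto simp: fun_eq_iff Rep_mseries_diff one_mseries.rep_eq mps_one_def mps_of_int_def)
qed

lemma Abs_mseries_mult: "Abs_mseries (mps_mult f g) = Abs_mseries f * Abs_mseries g"
  by (metis Abs_mseries_inverse UNIV_I Rep_mseries_inverse times_mseries.rep_eq)

section \<open>Lower bounds for the I-adic valuation\<close>

definition val_ge :: "('v::finite, 'a::comm_ring_1) mseries \<Rightarrow> real \<Rightarrow> bool" where
  "val_ge x c \<longleftrightarrow> (\<forall>e. real (mdeg e) < c \<longrightarrow> Rep_mseries x e = 0)"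

lemma val_ge_zero [simp]: "val_ge 0 c"
  by (simp add: val_ge_def zero_mseries.rep_eq mps_zero_def)

lemma val_ge_nonpos: "c \<le> 0 \<Longrightarrow> val_ge x c"
  by (auto simp: val_ge_def)

lemma val_ge_mono: "val_ge x c \<Longrightarrow> c' \<le> c \<Longrightarrow> val_ge x c'"
  by (auto simp: val_ge_def)

lemma val_ge_add: "val_ge x c \<Longrightarrow> val_ge y c \<Longrightarrow> val_ge (x + y) c"
  by (simp add: val_ge_def Rep_mseries_add)

lemma val_ge_sum: "(\<And>i. i \<in> A \<Longrightarrow> val_ge (F i) c) \<Longrightarrow> val_ge (sum F A) c"
  by (simp add: val_ge_def Rep_mseries_sum)

lemma mdeg_add_diff: "x \<le> e \<Longrightarrow> mdeg x + mdeg (e - x) = mdeg e"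
  unfolding mdeg_def by (simp add: sum.distrib[symmetric] le_fun_def)

lemma val_ge_mult:
  fixes x y :: "('v::finite, 'a::comm_ring_1) mseries"
  assumes "val_ge x c" and "val_ge y c'"
  shows "val_ge (x * y) (c + c')"
  unfolding val_ge_def
proof (intro allI impI)
  fix e :: "'v \<Rightarrow> nat" assume e: "real (mdeg e) < c + c'"
  have "Rep_mseries x u * Rep_mseries y (e - u) = 0" if "u \<le> e" for u
  proof -
    have "real (mdeg u) < c \<or> real (mdeg (e - u)) < c'"
      using e mdeg_add_diff[OF that] by linarith
    then show ?thesis using assms by (auto simp: val_ge_def)
  qed
  then show "Rep_mseries (x * y) e = 0"
    by (simp add: times_mseries.rep_eq mps_mult_eq)
qed

lemma val_ge_mult_left: "val_ge y c \<Longrightarrow> val_ge (x * y) c"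
  using val_ge_mult[OF val_ge_nonpos[of 0 x]] by simp

lemma val_ge_prod:
  "finite I \<Longrightarrow> (\<And>i. i \<in> I \<Longrightarrow> val_ge (x i) (c i)) \<Longrightarrow> val_ge (\<Prod>i\<in>I. x i) (\<Sum>i\<in>I. c i)"
  by (induction I rule: finite_induct) (simp_all add: val_ge_nonpos val_ge_mult)

lemma val_ge_prod_diff:
  "finite I \<Longrightarrow> (\<And>i. i \<in> I \<Longrightarrow> val_ge (x i - y i) c) \<Longrightarrow> val_ge ((\<Prod>i\<in>I. x i) - (\<Prod>i\<in>I. y i)) c"
proof (induction I rule: finite_induct)
  case (insert a I)
  have "(\<Prod>i\<in>insert a I. x i) - (\<Prod>i\<in>insert a I. y i) =
        x a * ((\<Prod>i\<in>I. x i) - (\<Prod>i\<in>I. y i)) + (\<Prod>i\<in>I. y i) * (x a - y a)"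
    using insert.hyps by (simp add: algebra_simps)
  then show ?case using insert by (simp add: val_ge_add val_ge_mult_left)
qed simp

lemma valI_ge_iff: "valI_ge f c \<longleftrightarrow> (\<forall>e. real (mdeg e) < c \<longrightarrow> f e = 0)"
proof (cases "f = mps_zero")
  case True
  then show ?thesis by (simp add: valI_ge_def valI_def mps_zero_def)
next
  case False
  then obtain e0 where "f e0 \<noteq> 0" by (auto simp: mps_zero_def)
  define n0 where "n0 = (LEAST n. \<exists>e. mdeg e = n \<and> f e \<noteq> 0)"
  have attained: "\<exists>e. mdeg e = n0 \<and> f e \<noteq> 0"
    unfolding n0_def by (rule LeastI[of _ "mdeg e0"]) (use \<open>f e0 \<noteq> 0\<close> in auto)
  have minimal: "f e \<noteq> 0 \<Longrightarrow> n0 \<le> mdeg e" for e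
    unfolding n0_def by (rule Least_le) auto
  have "(THE n. f \<in> Ipow n \<and> f \<notin> Ipow (Suc n)) = n0"
  proof (rule the_equality)
    show "f \<in> Ipow n0 \<and> f \<notin> Ipow (Suc n0)"
      using attained minimal by (auto simp: Ipow_def) (meson not_less)
  next
    fix n assume n: "f \<in> Ipow n \<and> f \<notin> Ipow (Suc n)"
    then obtain e where "mdeg e < Suc n" "f e \<noteq> 0" by (auto simp: Ipow_def)
    with n attained minimal show "n = n0"
      by (auto simp: Ipow_def) (meson le_antisym less_Suc_eq_le not_less order.trans)
  qed
  then have "valI_ge f c \<longleftrightarrow> c \<le> real n0"
    using False by (simp add: valI_ge_def valI_def)
  also have "\<dots> \<longleftrightarrow> (\<forall>e. real (mdeg e) < c \<longrightarrow> f e = 0)"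
    using attained minimal by (smt (verit) of_nat_le_iff)
  finally show ?thesis .
qed

lemma Ipow_ceiling_iff: "f \<in> Ipow (nat \<lceil>c\<rceil>) \<longleftrightarrow> (\<forall>e. real (mdeg e) < c \<longrightarrow> f e = 0)"
proof -
  have "n < nat \<lceil>c\<rceil> \<longleftrightarrow> real n < c" for n
    by (simp add: zless_nat_eq_int_zless flip: not_le ceiling_le_iff)
  then show ?thesis by (simp add: Ipow_def)
qed

section \<open>Minors\<close>

definition subdet :: "(nat \<Rightarrow> nat \<Rightarrow> 'r::comm_ring_1) \<Rightarrow> nat set \<Rightarrow> (nat \<Rightarrow> nat) \<Rightarrow> (nat \<Rightarrow> nat) \<Rightarrow> 'r" where
  "subdet A I r c = (\<Sum>\<sigma> | \<sigma> permutes I. of_int (sign \<sigma>) * (\<Prod>i\<in>I. A (r i) (c (\<sigma> i))))"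

lemma subdet_cong:
  assumes "\<And>i. i \<in> I \<Longrightarrow> r i = r' i" and "\<And>i. i \<in> I \<Longrightarrow> c i = c' i"
  shows "subdet A I r c = subdet A I r' c'"
  unfolding subdet_def using assms
  by (intro sum.cong refl arg_cong[where f="\<lambda>x. _ * x"] prod.cong) (auto simp: permutes_in_image)

lemma subdet_singleton: "subdet X {i} (\<lambda>_. m) (\<lambda>_. n) = X m n"
  by (simp add: subdet_def)

lemma subdet_permute_rows:
  assumes I: "finite I" and \<tau>: "\<tau> permutes I"
  shows "subdet A I (r \<circ> \<tau>) c = of_int (sign \<tau>) * subdet A I r c"
proof -
  have "subdet A I (r \<circ> \<tau>) c =
        (\<Sum>\<sigma> | \<sigma> permutes I. of_int (sign (\<sigma> \<circ> \<tau>)) * (\<Prod>i\<in>I. A (r (\<tau> i)) (c (\<sigma> (\<tau> i)))))"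
    unfolding subdet_def by (subst sum_permutations_compose_right[OF \<tau>]) simp
  also have "\<dots> = (\<Sum>\<sigma> | \<sigma> permutes I. of_int (sign \<tau>) * (of_int (sign \<sigma>) * (\<Prod>i\<in>I. A (r i) (c (\<sigma> i)))))"
  proof (rule sum.cong[OF refl])
    fix \<sigma> assume "\<sigma> \<in> {\<sigma>. \<sigma> permutes I}"
    then have "sign (\<sigma> \<circ> \<tau>) = sign \<sigma> * sign \<tau>"
      using I \<tau> by (auto intro: sign_compose permutation_permutes[THEN iffD2])
    moreover have "(\<Prod>i\<in>I. A (r (\<tau> i)) (c (\<sigma> (\<tau> i)))) = (\<Prod>i\<in>I. A (r i) (c (\<sigma> i)))"
      using prod.permute[OF \<tau>, of "\<lambda>i. A (r i) (c (\<sigma> i))"] by (simp add: o_def)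
    ultimately show "of_int (sign (\<sigma> \<circ> \<tau>)) * (\<Prod>i\<in>I. A (r (\<tau> i)) (c (\<sigma> (\<tau> i)))) =
        of_int (sign \<tau>) * (of_int (sign \<sigma>) * (\<Prod>i\<in>I. A (r i) (c (\<sigma> i))))"
      by (simp add: mult_ac)
  qed
  also have "\<dots> = of_int (sign \<tau>) * subdet A I r c"
    unfolding subdet_def by (simp add: sum_distrib_left)
  finally show ?thesis .
qed

text \<open>Composing with the transposition of the two equal rows is a sign-reversing involution
  between even and odd permutations; pairing them (rather than doubling) also works in
  characteristic 2.\<close>
lemma subdet_eq_0_if_rows_eq:
  assumes I: "finite I" and ij: "i \<in> I" "j \<in> I" "i \<noteq> j" and r: "r i = r j"
  shows "subdet A I r c = 0"
proof -
  let ?t = "Transposition.transpose i j"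
  let ?g = "\<lambda>\<sigma>. of_int (sign \<sigma>) * (\<Prod>l\<in>I. A (r l) (c (\<sigma> l)))"
  let ?E = "{\<sigma>. \<sigma> permutes I \<and> evenperm \<sigma>}"
  let ?O = "{\<sigma>. \<sigma> permutes I \<and> \<not> evenperm \<sigma>}"
  have t: "?t permutes I" and tp: "permutation ?t" and todd: "\<not> evenperm ?t"
    using ij I by (auto simp: permutes_swap_id evenperm_swap permutation_swap_id)
  have perm: "permutation \<sigma>" if "\<sigma> permutes I" for \<sigma>
    using that I permutation_permutes by blast
  have parity_swap: "evenperm (\<sigma> \<circ> ?t) \<longleftrightarrow> \<not> evenperm \<sigma>" if "\<sigma> permutes I" for \<sigma>
    using perm[OF that] tp todd by (simp add: evenperm_comp)
  have rows_swap: "r (?t l) = r l" for l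
    using r by (auto simp: Transposition.transpose_def)
  have flip: "?g (\<sigma> \<circ> ?t) = - ?g \<sigma>" if "\<sigma> permutes I" for \<sigma>
  proof -
    have "(\<Prod>l\<in>I. A (r l) (c (\<sigma> (?t l)))) = (\<Prod>l\<in>I. A (r l) (c (\<sigma> l)))"
      using prod.permute[OF t, of "\<lambda>l. A (r l) (c (\<sigma> l))"] by (simp add: o_def rows_swap)
    moreover have "sign (\<sigma> \<circ> ?t) = - sign \<sigma>"
      using ij by (simp add: sign_compose[OF perm[OF that] tp] sign_swap_id)
    ultimately show ?thesis by simp
  qed
  have fin: "finite {\<sigma>. \<sigma> permutes I}" using I by (rule finite_permutations)
  have "subdet A I r c = sum ?g ?E + sum ?g ?O"
    unfolding subdet_def
    by (subst sum.union_disjoint[symmetric]) (use fin in \<open>auto intro: sum.cong\<close>)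
  also have "sum ?g ?O = sum (\<lambda>\<sigma>. ?g (\<sigma> \<circ> ?t)) ?E"
    by (rule sum.reindex_bij_witness[where i="\<lambda>\<sigma>. \<sigma> \<circ> ?t" and j="\<lambda>\<sigma>. \<sigma> \<circ> ?t"])
       (auto simp: o_assoc[symmetric] permutes_compose[OF t] parity_swap)
  also have "\<dots> = - sum ?g ?E"
    unfolding sum_negf[symmetric] by (rule sum.cong[OF refl]) (rule flip; simp)
  finally show ?thesis by simp
qed

lemma subdet_eq_0_if_not_inj:
  assumes "finite I" and "\<not> inj_on r I"
  shows "subdet A I r c = 0"
  using assms subdet_eq_0_if_rows_eq unfolding inj_on_def by blast

lemma subdet_mult_expand:
  assumes I: "finite I" and L: "finite L"
  shows "subdet (\<lambda>m n. \<Sum>l\<in>L. A m l * B l n) I r c =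
         (\<Sum>f\<in>PiE I (\<lambda>_. L). (\<Prod>i\<in>I. A (r i) (f i)) * subdet B I f c)"
proof -
  have "subdet (\<lambda>m n. \<Sum>l\<in>L. A m l * B l n) I r c =
     (\<Sum>\<sigma> | \<sigma> permutes I. \<Sum>f\<in>PiE I (\<lambda>_. L).
        of_int (sign \<sigma>) * ((\<Prod>i\<in>I. A (r i) (f i)) * (\<Prod>i\<in>I. B (f i) (c (\<sigma> i)))))"
    unfolding subdet_def
  proof (rule sum.cong[OF refl])
    fix \<sigma>
    have "(\<Prod>i\<in>I. \<Sum>l\<in>L. A (r i) l * B l (c (\<sigma> i))) =
          (\<Sum>f\<in>PiE I (\<lambda>_. L). (\<Prod>i\<in>I. A (r i) (f i)) * (\<Prod>i\<in>I. B (f i) (c (\<sigma> i))))"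
      using I L by (simp add: prod_sum_PiE prod.distrib)
    then show "of_int (sign \<sigma>) * (\<Prod>i\<in>I. \<Sum>l\<in>L. A (r i) l * B l (c (\<sigma> i))) =
      (\<Sum>f\<in>PiE I (\<lambda>_. L). of_int (sign \<sigma>) * ((\<Prod>i\<in>I. A (r i) (f i)) * (\<Prod>i\<in>I. B (f i) (c (\<sigma> i)))))"
      by (simp add: sum_distrib_left)
  qed
  also have "\<dots> = (\<Sum>f\<in>PiE I (\<lambda>_. L). \<Sum>\<sigma> | \<sigma> permutes I.
        of_int (sign \<sigma>) * ((\<Prod>i\<in>I. A (r i) (f i)) * (\<Prod>i\<in>I. B (f i) (c (\<sigma> i)))))"
    by (rule sum.swap)
  also have "\<dots> = (\<Sum>f\<in>PiE I (\<lambda>_. L). (\<Prod>i\<in>I. A (r i) (f i)) * subdet B I f c)"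
    unfolding subdet_def by (simp add: sum_distrib_left mult_ac)
  finally show ?thesis .
qed

lemma subdet_mult_expand_permutations:
  assumes I: "finite I" and IL: "I \<subseteq> L"
  shows "(\<Sum>f | f \<in> PiE I (\<lambda>_. L) \<and> f ` I = I. (\<Prod>i\<in>I. A i (f i)) * subdet B I f c) =
         subdet A I id id * subdet B I id c"
proof -
  have "(\<Sum>f | f \<in> PiE I (\<lambda>_. L) \<and> f ` I = I. (\<Prod>i\<in>I. A i (f i)) * subdet B I f c) =
        (\<Sum>\<tau> | \<tau> permutes I. (\<Prod>i\<in>I. A i (\<tau> i)) * subdet B I \<tau> c)"
  proof (rule sum.reindex_bij_witness[where j="\<lambda>f x. if x \<in> I then f x else x" and i="\<lambda>\<tau>. restrict \<tau> I"])
    fix f assume "f \<in> {f. f \<in> PiE I (\<lambda>_. L) \<and> f ` I = I}"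
    then have fe: "f \<in> extensional I" and fI: "f ` I = I" by (auto simp: PiE_def)
    have "bij_betw f I I"
      using finite_surj_inj[OF I] fI by (simp add: bij_betw_def)
    then have "bij_betw (\<lambda>x. if x \<in> I then f x else x) I I"
      by (rule bij_betw_cong[THEN iffD1, rotated]) simp
    then show "(\<lambda>x. if x \<in> I then f x else x) \<in> {\<tau>. \<tau> permutes I}"
      by (auto intro: bij_imp_permutes)
    show "restrict (\<lambda>x. if x \<in> I then f x else x) I = f"
      using fe by (auto simp: restrict_def extensional_def)
    have "subdet B I (\<lambda>x. if x \<in> I then f x else x) c = subdet B I f c"
      by (rule subdet_cong) auto
    then show "(\<Prod>i\<in>I. A i ((\<lambda>x. if x \<in> I then f x else x) i)) *
        subdet B I (\<lambda>x. if x \<in> I then f x else x) c = (\<Prod>i\<in>I. A i (f i)) * subdet B I f c"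
      by (simp cong: prod.cong)
  next
    fix \<tau> assume "\<tau> \<in> {\<tau>. \<tau> permutes I}"
    then have \<tau>: "\<tau> permutes I" by simp
    show "(\<lambda>x. if x \<in> I then restrict \<tau> I x else x) = \<tau>"
      using \<tau> by (auto simp: fun_eq_iff permutes_not_in)
    show "restrict \<tau> I \<in> {f. f \<in> PiE I (\<lambda>_. L) \<and> f ` I = I}"
      using IL permutes_image[OF \<tau>] permutes_in_image[OF \<tau>] by auto
  qed
  also have "\<dots> = (\<Sum>\<tau> | \<tau> permutes I. of_int (sign \<tau>) * (\<Prod>i\<in>I. A i (\<tau> i)) * subdet B I id c)"
  proof (rule sum.cong[OF refl])
    fix \<tau> assume "\<tau> \<in> {\<tau>. \<tau> permutes I}"
    then have "subdet B I \<tau> c = of_int (sign \<tau>) * subdet B I id c"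
      using subdet_permute_rows[OF I, of \<tau> B id c] by simp
    then show "(\<Prod>i\<in>I. A i (\<tau> i)) * subdet B I \<tau> c = of_int (sign \<tau>) * (\<Prod>i\<in>I. A i (\<tau> i)) * subdet B I id c"
      by simp
  qed
  also have "\<dots> = subdet A I id id * subdet B I id c"
    unfolding subdet_def[of A] sum_distrib_right by simp
  finally show ?thesis .
qed

lemma val_ge_subdet_diff:
  assumes "finite I"
    and "\<And>i i'. i \<in> I \<Longrightarrow> i' \<in> I \<Longrightarrow> val_ge (X (r i) (c i') - Y (r i) (c i')) t"
  shows "val_ge (subdet X I r c - subdet Y I r c) t"
proof -
  have "subdet X I r c - subdet Y I r c = (\<Sum>\<sigma> | \<sigma> permutes I. of_int (sign \<sigma>) *
      ((\<Prod>i\<in>I. X (r i) (c (\<sigma> i))) - (\<Prod>i\<in>I. Y (r i) (c (\<sigma> i)))))"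
    unfolding subdet_def by (simp add: sum_subtractf[symmetric] right_diff_distrib)
  also have "val_ge \<dots> t"
    using assms by (intro val_ge_sum val_ge_mult_left val_ge_prod_diff) (auto simp: permutes_in_image)
  finally show ?thesis .
qed

definition ms_mat :: "('v::finite, 'a::comm_ring_1) imat \<Rightarrow> nat \<Rightarrow> nat \<Rightarrow> ('v, 'a) mseries" where
  "ms_mat A m n = Abs_mseries (A m n)"

lemma Rep_ms_mat [simp]: "Rep_mseries (ms_mat A m n) = A m n"
  by (simp add: ms_mat_def Abs_mseries_inverse)

lemma isum_finite: "finite A \<Longrightarrow> isum A F = Rep_mseries (\<Sum>i\<in>A. Abs_mseries (F i))"
  unfolding isum_def
  by (rule ext, simp add: Rep_mseries_sum Abs_mseries_inverse, rule sum.mono_neutral_left) auto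

lemma isum_eq_0: "(\<And>i. i \<in> A \<Longrightarrow> F i e = 0) \<Longrightarrow> isum A F e = 0"
  by (simp add: isum_def)

lemma isum_eq_single:
  assumes "i \<in> A" and "\<And>j. j \<in> A \<Longrightarrow> j \<noteq> i \<Longrightarrow> F j e = 0"
  shows "isum A F e = F i e"
proof -
  have "isum A F e = (\<Sum>j\<in>{i}. F j e)"
    unfolding isum_def using assms by (intro sum.mono_neutral_left) auto
  then show ?thesis by simp
qed

lemma mps_prod_eq:
  assumes "finite S"
  shows "mps_prod S F = Rep_mseries (\<Prod>i\<in>S. Abs_mseries (F i))"
proof -
  have "foldr mps_mult (map F xs) mps_one = Rep_mseries (prod_list (map (\<lambda>i. Abs_mseries (F i)) xs))" for xs
    by (induction xs) (simp_all add: one_mseries.rep_eq times_mseries.rep_eq Abs_mseries_inverse)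
  then show ?thesis
    using assms by (simp add: mps_prod_def mps_prod_list_def prod.distinct_set_conv_list[symmetric])
qed

lemma minor_det_eq_subdet: "finite S \<Longrightarrow> minor_det A S = Rep_mseries (subdet (ms_mat A) S id id)"
  unfolding minor_det_def subdet_def
  by (simp add: isum_finite finite_permutations mps_prod_eq Abs_mseries_mult ms_mat_def
                Rep_mseries_of_int[symmetric] Rep_mseries_inverse)

lemma mat_mult_mat_id_right: "mat_mult A mat_id = A"
proof (intro ext)
  fix m n e
  let ?t = "\<lambda>l. mps_mult (A m l) (mat_id l n) e"
  have t: "?t l = (if l = n then A m n e else 0)" for l
    by (simp add: mat_id_def mps_mult_commute[of _ mps_one] mps_mult_one_left)
       (simp add: mps_mult_eq mps_zero_def)
  have "mat_mult A mat_id m n e = (\<Sum>l | ?t l \<noteq> 0. ?t l)"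
    by (simp add: mat_mult_def isum_def)
  also have "\<dots> = (\<Sum>l\<in>{n}. ?t l)"
    by (rule sum.mono_neutral_left) (auto simp: t split: if_splits)
  finally show "mat_mult A mat_id m n e = A m n e"
    by (simp add: t)
qed

section \<open>Sums of distinct natural numbers\<close>

lemma two_mult_choose_two: "2 * (n choose 2) = n * (n - 1)"
proof (induction n)
  case (Suc n)
  then show ?case by (cases n) (simp_all add: numeral_2_eq_2 algebra_simps)
qed simp

lemma sum_atLeast0LessThan_id: "(\<Sum>i\<in>{0..<k}. i) = k choose 2"
  by (induction k) (auto simp: numeral_2_eq_2)

lemma sum_distinct_nat_ge:
  fixes U :: "nat set"
  assumes "finite U"
  shows "card U choose 2 \<le> \<Sum>U" and "U \<noteq> {0..<card U} \<Longrightarrow> card U choose 2 < \<Sum>U"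
proof -
  have "card U choose 2 \<le> \<Sum>U \<and> (U \<noteq> {0..<card U} \<longrightarrow> card U choose 2 < \<Sum>U)"
    using assms
  proof (induction "card U" arbitrary: U)
    case 0
    then show ?case by auto
  next
    case (Suc m)
    define u where "u = Max U"
    have "U \<noteq> {}" using Suc.hyps(2) by auto
    then have u: "u \<in> U" and u_max: "\<And>x. x \<in> U \<Longrightarrow> x \<le> u"
      using Suc.prems by (auto simp: u_def)
    let ?U' = "U - {u}"
    have card': "card ?U' = m" and sum_U: "\<Sum>U = \<Sum>?U' + u"
      using Suc.hyps(2) Suc.prems u by (simp_all add: sum.remove)
    have "U \<subseteq> {0..u}" using u_max by auto
    then have "card U \<le> Suc u" using card_mono[of "{0..u}" U] by simp
    then have m_le: "m \<le> u" using Suc.hyps(2) by simp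
    have IH: "m choose 2 \<le> \<Sum>?U' \<and> (?U' \<noteq> {0..<m} \<longrightarrow> m choose 2 < \<Sum>?U')"
      using Suc.hyps(1)[of ?U'] Suc.prems card' by simp
    have choose_Suc_m: "Suc m choose 2 = (m choose 2) + m"
      by (simp add: numeral_2_eq_2)
    have strict: "Suc m choose 2 < \<Sum>U" if "U \<noteq> {0..<Suc m}"
    proof (cases "u = m")
      case True
      have "?U' \<noteq> {0..<m}"
      proof
        assume "?U' = {0..<m}"
        then have "U = insert m {0..<m}" using u True by auto
        then show False using that by auto
      qed
      then show ?thesis using IH sum_U choose_Suc_m True by linarith
    next
      case False
      then show ?thesis using IH m_le sum_U choose_Suc_m by linarith
    qed
    show ?case
      using IH m_le sum_U choose_Suc_m strict Suc.hyps(2)[symmetric] by (simp del: binomial_Suc_Suc)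
  qed
  then show "card U choose 2 \<le> \<Sum>U" and "U \<noteq> {0..<card U} \<Longrightarrow> card U choose 2 < \<Sum>U"
    by auto
qed

lemma sum_inj_on_nat_ge:
  fixes f :: "'i \<Rightarrow> nat"
  assumes "finite I" and "inj_on f I"
  shows "card I choose 2 \<le> (\<Sum>i\<in>I. f i)"
    and "f ` I \<noteq> {0..<card I} \<Longrightarrow> card I choose 2 < (\<Sum>i\<in>I. f i)"
  using sum_distinct_nat_ge[of "f ` I"] assms by (simp_all add: card_image sum.reindex)

section \<open>Minors of products of twisted incremental matrices\<close>

definition twist_slope :: "nat \<Rightarrow> nat \<Rightarrow> real" where
  "twist_slope p d = real (p - 1) / real d"

definition twist_weight :: "nat \<Rightarrow> nat \<Rightarrow> (nat \<Rightarrow> nat) \<Rightarrow> (nat \<Rightarrow> nat) \<Rightarrow> nat set \<Rightarrow> real" where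
  "twist_weight p d r c I = (\<Sum>i\<in>I. real p * real (r i) - real (c i)) / real d"

lemma twist_slope_nonneg: "0 \<le> twist_slope p d"
  by (simp add: twist_slope_def)

lemma twist_weight_permute_columns:
  "\<sigma> permutes I \<Longrightarrow> twist_weight p d r (c \<circ> \<sigma>) I = twist_weight p d r c I"
  unfolding twist_weight_def sum_subtractf
  using sum.permute[of \<sigma> I "\<lambda>i. real (c i)"] by (simp add: o_def)

lemma twist_weight_trans:
  assumes "1 \<le> p"
  shows "twist_weight p d r f I + twist_weight p d f c I =
         twist_weight p d r c I + twist_slope p d * real (\<Sum>i\<in>I. f i)"
proof -
  have "(\<Sum>i\<in>I. real p * real (r i) - real (f i)) + (\<Sum>i\<in>I. real p * real (f i) - real (c i)) =
        (\<Sum>i\<in>I. real p * real (r i) - real (c i)) + (real p - 1) * real (\<Sum>i\<in>I. f i)"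
    by (simp add: sum.distrib[symmetric] sum_distrib_left algebra_simps)
  then show ?thesis
    using assms by (simp add: twist_weight_def twist_slope_def of_nat_diff add_divide_distrib[symmetric])
qed

lemma twist_weight_id: "1 \<le> p \<Longrightarrow> twist_weight p d id id S = twist_slope p d * real (\<Sum>i\<in>S. i)"
  using twist_weight_trans[of p d id id S id] by simp

lemma twisted_incremental_iff:
  "twisted_incremental p d A \<longleftrightarrow> (\<forall>m n. val_ge (ms_mat A m n) ((real m * real p - real n) / real d))"
  by (simp add: twisted_incremental_def valI_ge_iff val_ge_def)

lemma val_ge_twisted_prod:
  assumes "twisted_incremental p d A" and "finite I"
  shows "val_ge (\<Prod>i\<in>I. ms_mat A (r i) (c i)) (twist_weight p d r c I)"
proof -
  have "val_ge (\<Prod>i\<in>I. ms_mat A (r i) (c i)) (\<Sum>i\<in>I. (real (r i) * real p - real (c i)) / real d)"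
    using assms by (intro val_ge_prod) (auto simp: twisted_incremental_iff)
  then show ?thesis
    by (simp add: twist_weight_def sum_divide_distrib[symmetric] mult.commute)
qed

lemma val_ge_twisted_subdet:
  assumes "twisted_incremental p d A" and "finite I"
  shows "val_ge (subdet (ms_mat A) I r c) (twist_weight p d r c I)"
  unfolding subdet_def
proof (intro val_ge_sum val_ge_mult_left)
  fix \<sigma> assume "\<sigma> \<in> {\<sigma>. \<sigma> permutes I}"
  then show "val_ge (\<Prod>i\<in>I. ms_mat A (r i) (c (\<sigma> i))) (twist_weight p d r c I)"
    using val_ge_twisted_prod[OF assms, of r "c \<circ> \<sigma>"] twist_weight_permute_columns[of \<sigma> I p d r c]
    by simp
qed

text \<open>A product of j + 1 twisted incremental matrices satisfies this with t = j (p - 1) / d.\<close>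
definition twisted_minor_bound :: "nat \<Rightarrow> nat \<Rightarrow> real \<Rightarrow> ('v::finite, 'a::comm_ring_1) imat \<Rightarrow> bool" where
  "twisted_minor_bound p d t B \<longleftrightarrow> (\<forall>I r c. finite I \<longrightarrow>
     val_ge (subdet (ms_mat B) I r c) (twist_weight p d r c I + t * real (card I choose 2)))"

lemma twisted_minor_bound_zero:
  "twisted_incremental p d A \<Longrightarrow> twisted_minor_bound p d 0 A"
  by (simp add: twisted_minor_bound_def val_ge_twisted_subdet)

lemma val_ge_entry_twisted_minor_bound:
  "twisted_minor_bound p d t B \<Longrightarrow> val_ge (ms_mat B m n) ((real p * real m - real n) / real d)"
  unfolding twisted_minor_bound_def
  by (drule spec[of _ "{0}"], drule spec[of _ "\<lambda>_. m"], drule spec[of _ "\<lambda>_. n"])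
     (simp add: subdet_singleton twist_weight_def numeral_2_eq_2)

lemma val_ge_mat_mult_truncate:
  fixes A B :: "('v::finite, 'a::comm_ring_1) imat"
  assumes "\<And>l. K \<le> l \<Longrightarrow> val_ge (ms_mat B l n) s"
  shows "val_ge (ms_mat (mat_mult A B) m n - (\<Sum>l<K. ms_mat A m l * ms_mat B l n)) s"
  unfolding val_ge_def
proof (intro allI impI)
  fix e :: "'v \<Rightarrow> nat" assume e: "real (mdeg e) < s"
  have tail: "mps_mult (A m l) (B l n) e = 0" if "K \<le> l" for l
    using val_ge_mult_left[OF assms[OF that], of "ms_mat A m l"] e
    by (simp add: val_ge_def times_mseries.rep_eq)
  have "mat_mult A B m n e = (\<Sum>l | mps_mult (A m l) (B l n) e \<noteq> 0. mps_mult (A m l) (B l n) e)"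
    by (simp add: mat_mult_def isum_def)
  also have "\<dots> = (\<Sum>l<K. mps_mult (A m l) (B l n) e)"
    using tail by (intro sum.mono_neutral_left) (auto simp: not_less[symmetric])
  finally show "Rep_mseries (ms_mat (mat_mult A B) m n - (\<Sum>l<K. ms_mat A m l * ms_mat B l n)) e = 0"
    by (simp add: Rep_mseries_diff Rep_mseries_sum times_mseries.rep_eq)
qed

text \<open>Entries of B far down a column are I-adically small, so up to any order s the infinite
  sum defining A B may be truncated.\<close>
lemma val_ge_subdet_mat_mult_approx:
  fixes A B :: "('v::finite, 'a::comm_ring_1) imat"
  assumes p: "1 \<le> p" and d: "0 < d" and B: "twisted_minor_bound p d t B" and I: "finite I"
  obtains K where "K0 \<le> K" and "val_ge (subdet (ms_mat (mat_mult A B)) I r c -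
     (\<Sum>f\<in>PiE I (\<lambda>_. {..<K}). (\<Prod>i\<in>I. ms_mat A (r i) (f i)) * subdet (ms_mat B) I f c)) s"
proof
  define K where "K = K0 + nat \<lceil>s * real d\<rceil> + (\<Sum>i\<in>I. c i)"
  show "K0 \<le> K" by (simp add: K_def)
  have small: "val_ge (ms_mat B l (c i)) s" if "K \<le> l" "i \<in> I" for l i
  proof (rule val_ge_mono[OF val_ge_entry_twisted_minor_bound[OF B]])
    have "c i \<le> (\<Sum>i\<in>I. c i)" using that I by (intro member_le_sum) auto
    then have "s * real d \<le> real l - real (c i)"
      using that(1) by (simp add: K_def) linarith
    also have "\<dots> \<le> real p * real l - real (c i)"
      using p by (simp add: mult_le_cancel_right1)
    finally show "s \<le> (real p * real l - real (c i)) / real d"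
      using d by (simp add: pos_le_divide_eq)
  qed
  have "val_ge (subdet (ms_mat (mat_mult A B)) I r c -
                subdet (\<lambda>m n. \<Sum>l<K. ms_mat A m l * ms_mat B l n) I r c) s"
    using I small by (intro val_ge_subdet_diff val_ge_mat_mult_truncate) auto
  then show "val_ge (subdet (ms_mat (mat_mult A B)) I r c -
     (\<Sum>f\<in>PiE I (\<lambda>_. {..<K}). (\<Prod>i\<in>I. ms_mat A (r i) (f i)) * subdet (ms_mat B) I f c)) s"
    by (simp add: subdet_mult_expand[OF I])
qed

lemma val_ge_expansion_term:
  assumes p: "1 \<le> p" and A: "twisted_incremental p d A" and B: "twisted_minor_bound p d t B"
    and I: "finite I"
  shows "val_ge ((\<Prod>i\<in>I. ms_mat A (r i) (f i)) * subdet (ms_mat B) I f c)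
           (twist_weight p d r c I + twist_slope p d * real (\<Sum>i\<in>I. f i) + t * real (card I choose 2))"
proof -
  have "val_ge ((\<Prod>i\<in>I. ms_mat A (r i) (f i)) * subdet (ms_mat B) I f c)
          (twist_weight p d r f I + (twist_weight p d f c I + t * real (card I choose 2)))"
    using B I by (intro val_ge_mult val_ge_twisted_prod[OF A I]) (simp add: twisted_minor_bound_def)
  moreover have "twist_weight p d r f I + (twist_weight p d f c I + t * real (card I choose 2)) =
      twist_weight p d r c I + twist_slope p d * real (\<Sum>i\<in>I. f i) + t * real (card I choose 2)"
    using twist_weight_trans[OF p, of d r f I c] by linarith
  ultimately show ?thesis by simp
qed

lemma twisted_minor_bound_mat_mult:
  fixes A B :: "('v::finite, 'a::comm_ring_1) imat"
  assumes p: "1 \<le> p" and d: "0 < d"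
    and A: "twisted_incremental p d A" and B: "twisted_minor_bound p d t B"
  shows "twisted_minor_bound p d (t + twist_slope p d) (mat_mult A B)"
  unfolding twisted_minor_bound_def
proof (intro allI impI)
  fix I :: "nat set" and r c :: "nat \<Rightarrow> nat" assume I: "finite I"
  let ?L = "twist_weight p d r c I + (t + twist_slope p d) * real (card I choose 2)"
  let ?F = "\<lambda>f. (\<Prod>i\<in>I. ms_mat A (r i) (f i)) * subdet (ms_mat B) I f c"
  obtain K where approx:
    "val_ge (subdet (ms_mat (mat_mult A B)) I r c - sum ?F (PiE I (\<lambda>_. {..<K}))) ?L"
    using val_ge_subdet_mat_mult_approx[OF p d B I] by blast
  have "val_ge (?F f) ?L" for f
  proof (cases "inj_on f I")
    case True
    have "twist_slope p d * real (card I choose 2) \<le> twist_slope p d * real (\<Sum>i\<in>I. f i)"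
      by (intro mult_left_mono twist_slope_nonneg of_nat_mono sum_inj_on_nat_ge(1)[OF I True])
    then have "?L \<le> twist_weight p d r c I + twist_slope p d * real (\<Sum>i\<in>I. f i) + t * real (card I choose 2)"
      by (simp add: algebra_simps)
    then show ?thesis
      using val_ge_expansion_term[OF p A B I] val_ge_mono by blast
  next
    case False
    then show ?thesis by (simp add: subdet_eq_0_if_not_inj[OF I])
  qed
  then have "val_ge (sum ?F (PiE I (\<lambda>_. {..<K}))) ?L"
    by (intro val_ge_sum)
  from val_ge_add[OF approx this] show "val_ge (subdet (ms_mat (mat_mult A B)) I r c) ?L"
    by simp
qed

text \<open>Among the terms of the expansion of a leading minor of A B, those indexed by
  permutations of {0..<k} give the product of the leading minors and all others have
  strictly larger index sum, which gains one more (p - 1)/d.\<close>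
lemma val_ge_leading_minor_mat_mult:
  fixes A B :: "('v::finite, 'a::comm_ring_1) imat"
  assumes p: "1 \<le> p" and d: "0 < d"
    and A: "twisted_incremental p d A" and B: "twisted_minor_bound p d t B"
  shows "val_ge (subdet (ms_mat (mat_mult A B)) {0..<k} id id -
                 subdet (ms_mat A) {0..<k} id id * subdet (ms_mat B) {0..<k} id id)
           ((t + 2 * twist_slope p d) * real (k choose 2) + twist_slope p d)"
proof -
  let ?I = "{0..<k}"
  let ?b = "twist_slope p d"
  let ?L = "(t + 2 * ?b) * real (k choose 2) + ?b"
  let ?F = "\<lambda>f. (\<Prod>i\<in>?I. ms_mat A (id i) (f i)) * subdet (ms_mat B) ?I f id"
  have I: "finite ?I" by simp
  obtain K where "k \<le> K" and approx:
    "val_ge (subdet (ms_mat (mat_mult A B)) ?I id id - sum ?F (PiE ?I (\<lambda>_. {..<K}))) ?L"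
    using val_ge_subdet_mat_mult_approx[OF p d B I, of k] by blast
  let ?P = "PiE ?I (\<lambda>_. {..<K})"
  let ?M = "{f. f \<in> ?P \<and> f ` ?I = ?I}"
  have split: "sum ?F ?P = sum ?F (?P - ?M) + sum ?F ?M"
    by (rule sum.subset_diff) (auto simp: finite_PiE)
  have "?I \<subseteq> {..<K}" using \<open>k \<le> K\<close> by auto
  from subdet_mult_expand_permutations[OF I this, of "ms_mat A" "ms_mat B" id]
  have main: "sum ?F ?M = subdet (ms_mat A) ?I id id * subdet (ms_mat B) ?I id id"
    by simp
  have "val_ge (?F f) ?L" if "f \<in> ?P - ?M" for f
  proof (cases "inj_on f ?I")
    case True
    have "f ` ?I \<noteq> {0..<card ?I}" using that by auto
    then have "Suc (k choose 2) \<le> (\<Sum>i\<in>?I. f i)"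
      using sum_inj_on_nat_ge(2)[OF I True] by (simp add: Suc_le_eq)
    then have "?b * real (Suc (k choose 2)) \<le> ?b * real (\<Sum>i\<in>?I. f i)"
      by (intro mult_left_mono twist_slope_nonneg of_nat_mono)
    moreover have "twist_weight p d id id ?I = ?b * real (k choose 2)"
      by (simp add: twist_weight_id[OF p] sum_atLeast0LessThan_id)
    ultimately have "?L \<le> twist_weight p d id id ?I + ?b * real (\<Sum>i\<in>?I. f i) + t * real (card ?I choose 2)"
      by (simp add: algebra_simps)
    then show ?thesis
      using val_ge_expansion_term[OF p A B I, of id f id] val_ge_mono by blast
  next
    case False
    then show ?thesis by (simp add: subdet_eq_0_if_not_inj[OF I])
  qed
  then have "val_ge (sum ?F (?P - ?M)) ?L"
    by (intro val_ge_sum)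
  from val_ge_add[OF approx this] show ?thesis
    using split main by (simp add: algebra_simps)
qed

lemma twisted_minor_bound_mat_chain:
  assumes p: "1 \<le> p" and d: "0 < d" and M: "\<forall>i\<le>j. twisted_incremental p d (M i)"
  shows "twisted_minor_bound p d (real j * twist_slope p d) (mat_chain M (Suc j))"
  using M
proof (induction j)
  case 0
  then show ?case by (simp add: mat_mult_mat_id_right twisted_minor_bound_zero)
next
  case (Suc j)
  have "twisted_incremental p d (M (Suc j))"
    using Suc.prems by auto
  moreover have "twisted_minor_bound p d (real j * twist_slope p d) (mat_chain M (Suc j))"
    using Suc.prems by (intro Suc.IH) auto
  ultimately have "twisted_minor_bound p d (real j * twist_slope p d + twist_slope p d)
                     (mat_chain M (Suc (Suc j)))"
    by (simp only: mat_chain.simps(2)[of M "Suc j"] twisted_minor_bound_mat_mult[OF p d])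
  then show ?case by (simp add: algebra_simps)
qed

lemma val_ge_leading_minor_mat_chain:
  assumes p: "1 \<le> p" and d: "0 < d" and M: "\<forall>i\<le>j. twisted_incremental p d (M i)"
  shows "val_ge (subdet (ms_mat (mat_chain M (Suc j))) {0..<k} id id -
                 (\<Prod>l\<in>{0..<Suc j}. subdet (ms_mat (M l)) {0..<k} id id))
           (real (Suc j) * twist_slope p d * real (k choose 2) + twist_slope p d)"
  using M
proof (induction j)
  case 0
  then show ?case by (simp add: mat_mult_mat_id_right)
next
  case (Suc j)
  let ?b = "twist_slope p d"
  let ?D = "\<lambda>l. subdet (ms_mat (M l)) {0..<k} id id"
  let ?C = "subdet (ms_mat (mat_chain M (Suc j))) {0..<k} id id"
  let ?C' = "subdet (ms_mat (mat_chain M (Suc (Suc j)))) {0..<k} id id"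
  have twisted: "twisted_incremental p d (M (Suc j))" and "\<forall>i\<le>j. twisted_incremental p d (M i)"
    using Suc.prems by auto
  then have IH: "val_ge (?C - (\<Prod>l\<in>{0..<Suc j}. ?D l)) (real (Suc j) * ?b * real (k choose 2) + ?b)"
    and chain: "twisted_minor_bound p d (real j * ?b) (mat_chain M (Suc j))"
    using Suc.IH twisted_minor_bound_mat_chain[OF p d] by blast+
  have step: "val_ge (?C' - ?D (Suc j) * ?C) (real (Suc (Suc j)) * ?b * real (k choose 2) + ?b)"
    using val_ge_leading_minor_mat_mult[OF p d twisted chain] by (simp add: algebra_simps)
  have "val_ge (?D (Suc j)) (?b * real (k choose 2))"
    using val_ge_twisted_subdet[OF twisted, of "{0..<k}" id id]
    by (simp add: twist_weight_id[OF p] sum_atLeast0LessThan_id)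
  from val_ge_mult[OF this IH]
  have tail: "val_ge (?D (Suc j) * (?C - (\<Prod>l\<in>{0..<Suc j}. ?D l)))
          (real (Suc (Suc j)) * ?b * real (k choose 2) + ?b)"
    by (simp add: algebra_simps)
  have "?C' - (\<Prod>l\<in>{0..<Suc (Suc j)}. ?D l) =
        (?C' - ?D (Suc j) * ?C) + ?D (Suc j) * (?C - (\<Prod>l\<in>{0..<Suc j}. ?D l))"
    by (simp only: prod.atLeast0_lessThan_Suc[of _ "Suc j"]) (simp add: algebra_simps)
  with val_ge_add[OF step tail] show ?case
    by (simp only:)
qed

section \<open>The coefficients of the characteristic series\<close>

lemma val_ge_principal_minor:
  assumes p: "1 \<le> p" and C: "twisted_minor_bound p d t C" and S: "finite S" "card S = k"
  shows "val_ge (subdet (ms_mat C) S id id)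
           ((t + twist_slope p d) * real (k choose 2) + (if S = {0..<k} then 0 else twist_slope p d))"
proof (rule val_ge_mono)
  let ?b = "twist_slope p d"
  have "val_ge (subdet (ms_mat C) S id id) (twist_weight p d id id S + t * real (card S choose 2))"
    using C S(1) unfolding twisted_minor_bound_def by blast
  then show "val_ge (subdet (ms_mat C) S id id) (?b * real (\<Sum>i\<in>S. i) + t * real (k choose 2))"
    using S(2) by (simp add: twist_weight_id[OF p])
  have "(k choose 2) + (if S = {0..<k} then 0 else 1) \<le> (\<Sum>i\<in>S. i)"
    using sum_distinct_nat_ge[OF S(1), unfolded S(2)] by (cases "S = {0..<k}") simp_all
  then have "real ((k choose 2) + (if S = {0..<k} then 0 else 1)) \<le> real (\<Sum>i\<in>S. i)"
    by (rule of_nat_mono)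
  from mult_left_mono[OF this twist_slope_nonneg[of p d]]
  show "(t + ?b) * real (k choose 2) + (if S = {0..<k} then 0 else ?b) \<le>
        ?b * real (\<Sum>i\<in>S. i) + t * real (k choose 2)"
    by (simp add: algebra_simps split: if_splits)
qed

lemma valI_ge_char_coeff:
  assumes "\<And>S. finite S \<Longrightarrow> card S = k \<Longrightarrow> val_ge (subdet (ms_mat C) S id id) x"
  shows "valI_ge (char_coeff C k) x"
  unfolding valI_ge_iff char_coeff_def
  using assms by (auto intro!: isum_eq_0 simp: minor_det_eq_subdet val_ge_def)

lemma char_coeff_diff_in_Ipow:
  fixes C :: "('v::finite, 'a::comm_ring_1) imat"
  assumes minors: "\<And>S. finite S \<Longrightarrow> card S = k \<Longrightarrow> S \<noteq> {0..<k} \<Longrightarrow>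
                      val_ge (subdet (ms_mat C) S id id) x"
    and leading: "val_ge (subdet (ms_mat C) {0..<k} id id - P) x"
  shows "mps_diff (char_coeff C k) (Rep_mseries P) \<in> Ipow (nat \<lceil>x\<rceil>)"
  unfolding Ipow_ceiling_iff
proof (intro allI impI)
  fix e :: "'v \<Rightarrow> nat" assume e: "real (mdeg e) < x"
  then have "char_coeff C k e = minor_det C {0..<k} e"
    unfolding char_coeff_def using minors
    by (intro isum_eq_single) (auto simp: minor_det_eq_subdet val_ge_def)
  with leading e show "mps_diff (char_coeff C k) (Rep_mseries P) e = 0"
    by (simp add: mps_diff_def minor_det_eq_subdet val_ge_def Rep_mseries_diff)
qed

theorem mainTheorem11:
  fixes p d a :: nat
    and M :: "nat \<Rightarrow> ('v::finite, 'a::comm_ring_1) imat"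
  assumes "prime p" and "d > 0" and "a \<ge> 1"
    and "\<forall>j<a. twisted_incremental p d (M j)"
  shows "\<forall>k. valI_ge (char_coeff (mat_chain M a) k)
                 (real (a * k * (k - 1) * (p - 1)) / (2 * real d))
          \<and> mps_diff (char_coeff (mat_chain M a) k)
                     (mps_prod {0..<a} (\<lambda>j. minor_det (M j) {0..<k}))
              \<in> Ipow (nat \<lceil>(real (a * k * (k - 1) * (p - 1)) + real (p - 1)) / (2 * real d)\<rceil>)"
proof
  fix k
  obtain j where a: "a = Suc j" using \<open>a \<ge> 1\<close> by (cases a) auto
  have p: "1 \<le> p" using prime_gt_0_nat[OF \<open>prime p\<close>] by simp
  have M: "\<forall>i\<le>j. twisted_incremental p d (M i)" using assms(4) a by auto
  let ?b = "twist_slope p d"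
  let ?X = "real a * ?b * real (k choose 2)"
  have "real (a * k * (k - 1) * (p - 1)) = real a * (2 * real (k choose 2)) * real (p - 1)"
    by (metis two_mult_choose_two mult.assoc of_nat_mult of_nat_numeral)
  then have bounds: "real (a * k * (k - 1) * (p - 1)) / (2 * real d) = ?X"
    "(real (a * k * (k - 1) * (p - 1)) + real (p - 1)) / (2 * real d) = ?X + ?b / 2"
    using \<open>d > 0\<close> by (simp_all add: twist_slope_def field_simps)
  have minors: "val_ge (subdet (ms_mat (mat_chain M a)) S id id) (?X + (if S = {0..<k} then 0 else ?b))"
    if "finite S" "card S = k" for S
    using val_ge_principal_minor[OF p twisted_minor_bound_mat_chain[OF p \<open>d > 0\<close> M] that]
    by (simp add: a algebra_simps)
  have "valI_ge (char_coeff (mat_chain M a) k) ?X"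
    using twist_slope_nonneg[of p d] by (intro valI_ge_char_coeff val_ge_mono[OF minors]) auto
  moreover have "mps_diff (char_coeff (mat_chain M a) k)
                   (Rep_mseries (\<Prod>l\<in>{0..<a}. subdet (ms_mat (M l)) {0..<k} id id))
                 \<in> Ipow (nat \<lceil>?X + ?b / 2\<rceil>)"
    using twist_slope_nonneg[of p d]
      val_ge_leading_minor_mat_chain[OF p \<open>d > 0\<close> M, of k, folded a]
    by (intro char_coeff_diff_in_Ipow val_ge_mono[OF minors]) (auto elim!: val_ge_mono)
  ultimately show "valI_ge (char_coeff (mat_chain M a) k) (real (a * k * (k - 1) * (p - 1)) / (2 * real d))
      \<and> mps_diff (char_coeff (mat_chain M a) k) (mps_prod {0..<a} (\<lambda>j. minor_det (M j) {0..<k}))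
          \<in> Ipow (nat \<lceil>(real (a * k * (k - 1) * (p - 1)) + real (p - 1)) / (2 * real d)\<rceil>)"
    unfolding bounds by (simp add: mps_prod_eq minor_det_eq_subdet Rep_mseries_inverse)
qed

end
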